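(* Let $\alpha>0$ with $\alpha\neq1$. There is a constant $C=C(\alpha)$ such that for every $R>0$, every $b\in\mathbb{R}$, and each choice of sign $\pm$, $$\Big|\int_0^R e^{i(b e^{x}\pm e^{\alpha x})}\,dx\Big|\le C.$$ *)

theory Defs
  imports "HOL-Analysis.Analysis"
begin

end

theory Submission
  imports Defs
begin

(* Write phi(x) = b e^x + s e^(alpha x). Then phi'(x) = e^(alpha x) (s alpha + b e^((1 - alpha) x))
   has at most one zero m, and for |x - m| >= 1 we have |phi'(x)| >= c e^(alpha x) with c > 0
   depending only on alpha. On such intervals integrate by parts,
     int e^(i phi) = [-i e^(i phi) / phi'] - int i e^(i phi) phi'' / phi'^2,
   and since phi'' - phi' = s alpha (alpha - 1) e^(alpha x), the last integrand is O(e^(-alpha x)),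
   which is integrable on [0, oo). The window [m - 1, m + 1] contributes at most its length. *)

lemma has_vector_derivative_cis_div_deriv:
  fixes \<phi> \<phi>' \<phi>'' :: "real \<Rightarrow> real"
  assumes "(\<phi> has_real_derivative \<phi>' x) (at x within S)"
    and "(\<phi>' has_real_derivative \<phi>'' x) (at x within S)"
    and "\<phi>' x \<noteq> 0"
  shows "((\<lambda>x. - \<i> * cis (\<phi> x) / complex_of_real (\<phi>' x)) has_vector_derivative
           (cis (\<phi> x) + \<i> * cis (\<phi> x) * complex_of_real (\<phi>'' x / (\<phi>' x)\<^sup>2))) (at x within S)"
proof -
  have cis: "((\<lambda>x. cis (\<phi> x)) has_vector_derivative (\<phi>' x *\<^sub>R (\<i> * cis (\<phi> x)))) (at x within S)"
    using has_derivative_cis[OF assms(1)[unfolded has_field_derivative_def]]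
    by (simp add: has_vector_derivative_def mult.commute)
  have "((\<lambda>x. inverse (\<phi>' x)) has_real_derivative - (inverse (\<phi>' x) * \<phi>'' x * inverse (\<phi>' x)))
      (at x within S)"
    using DERIV_inverse_fun[OF assms(2,3)] by (simp add: field_simps power2_eq_square)
  then have inv: "((\<lambda>x. complex_of_real (inverse (\<phi>' x))) has_vector_derivative
      complex_of_real (- (inverse (\<phi>' x) * \<phi>'' x * inverse (\<phi>' x)))) (at x within S)"
    by (rule has_vector_derivative_of_real)
  have "((\<lambda>x. (- \<i> * cis (\<phi> x)) * complex_of_real (inverse (\<phi>' x))) has_vector_derivative
      ((- \<i> * cis (\<phi> x)) * complex_of_real (- (inverse (\<phi>' x) * \<phi>'' x * inverse (\<phi>' x)))
       + (- \<i> * (\<phi>' x *\<^sub>R (\<i> * cis (\<phi> x)))) * complex_of_real (inverse (\<phi>' x)))) (at x within S)"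
    by (intro has_vector_derivative_mult has_vector_derivative_mult_right cis inv)
  then show ?thesis
    using assms(3)
    by (simp add: divide_inverse) (erule has_vector_derivative_eq_rhs;
        simp add: field_simps power2_eq_square scaleR_conv_of_real)
qed

lemma norm_integral_cis_le:
  fixes \<phi> \<phi>' \<phi>'' :: "real \<Rightarrow> real"
  assumes "a \<le> c"
    and d1: "\<And>x. x \<in> {a..c} \<Longrightarrow> (\<phi> has_real_derivative \<phi>' x) (at x)"
    and d2: "\<And>x. x \<in> {a..c} \<Longrightarrow> (\<phi>' has_real_derivative \<phi>'' x) (at x)"
    and "\<And>x. x \<in> {a..c} \<Longrightarrow> \<phi>' x \<noteq> 0"
    and "continuous_on {a..c} \<phi>''"
  shows "norm (integral {a..c} (\<lambda>x. cis (\<phi> x))) \<le> 1 / \<bar>\<phi>' a\<bar> + 1 / \<bar>\<phi>' c\<bar>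
           + integral {a..c} (\<lambda>x. \<bar>\<phi>'' x\<bar> / (\<phi>' x)\<^sup>2)"
proof -
  define F where "F = (\<lambda>x. - \<i> * cis (\<phi> x) / complex_of_real (\<phi>' x))"
  define G where "G = (\<lambda>x. \<i> * cis (\<phi> x) * complex_of_real (\<phi>'' x / (\<phi>' x)\<^sup>2))"
  have "continuous_on {a..c} \<phi>" "continuous_on {a..c} \<phi>'"
    using d1 d2 by (meson continuous_at_imp_continuous_on DERIV_isCont)+
  then have G: "G integrable_on {a..c}"
    and H: "(\<lambda>x. \<bar>\<phi>'' x\<bar> / (\<phi>' x)\<^sup>2) integrable_on {a..c}"
    using assms by (auto simp: G_def intro!: integrable_continuous_interval continuous_intros)
  have "((\<lambda>x. cis (\<phi> x) + G x) has_integral F c - F a) {a..c}"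
    unfolding F_def G_def using assms
    by (intro fundamental_theorem_of_calculus has_vector_derivative_cis_div_deriv)
      (auto intro: has_field_derivative_at_within)
  from has_integral_diff[OF this integrable_integral[OF G]]
  have "integral {a..c} (\<lambda>x. cis (\<phi> x)) = F c - F a - integral {a..c} G"
    by (simp add: integral_unique)
  also have "norm \<dots> \<le> norm (F c) + norm (F a) + norm (integral {a..c} G)"
    by (smt (verit) norm_triangle_ineq4)
  also have "norm (integral {a..c} G) \<le> integral {a..c} (\<lambda>x. \<bar>\<phi>'' x\<bar> / (\<phi>' x)\<^sup>2)"
    using G H by (intro integral_norm_bound_integral) (auto simp: G_def norm_mult norm_divide norm_power)
  finally show ?thesis
    by (simp add: F_def norm_divide norm_mult)
qed

lemma abs_div_square_le:
  fixes P Q E c k :: real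
  assumes "0 < E" "0 < c" "0 \<le> k" "c * E \<le> P" "\<bar>Q\<bar> \<le> P + k * E"
  shows "\<bar>Q\<bar> / P\<^sup>2 \<le> (1 / c + k / c\<^sup>2) / E"
proof -
  have P: "0 < P" using assms by (smt (verit) mult_pos_pos)
  have "\<bar>Q\<bar> / P\<^sup>2 \<le> (P + k * E) / P\<^sup>2"
    using assms by (simp add: divide_right_mono)
  also have "\<dots> = 1 / P + k * E / P\<^sup>2"
    using P by (simp add: field_simps power2_eq_square)
  also have "\<dots> \<le> 1 / (c * E) + k * E / (c * E)\<^sup>2"
    using assms P by (intro add_mono frac_le divide_left_mono power_mono mult_pos_pos) auto
  also have "\<dots> = (1 / c + k / c\<^sup>2) / E"
    using assms by (simp add: field_simps power2_eq_square)
  finally show ?thesis .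
qed

lemma integral_exp_neg_le:
  fixes \<alpha> a c :: real
  assumes "0 < \<alpha>" "0 \<le> a" "a \<le> c"
  shows "integral {a..c} (\<lambda>y. exp (- (\<alpha> * y))) \<le> 1 / \<alpha>"
proof -
  have "((\<lambda>y. exp (- (\<alpha> * y))) has_integral
      (- exp (- (\<alpha> * c)) / \<alpha>) - (- exp (- (\<alpha> * a)) / \<alpha>)) {a..c}"
  proof (rule fundamental_theorem_of_calculus)
    show "((\<lambda>y. - exp (- (\<alpha> * y)) / \<alpha>) has_vector_derivative exp (- (\<alpha> * x)))
        (at x within {a..c})" for x
      unfolding has_real_derivative_iff_has_vector_derivative [symmetric]
      using assms(1) by (auto intro!: derivative_eq_intros)
  qed (use assms in auto)
  then have "integral {a..c} (\<lambda>y. exp (- (\<alpha> * y))) = (exp (- (\<alpha> * a)) - exp (- (\<alpha> * c))) / \<alpha>"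
    by (simp add: integral_unique diff_divide_distrib)
  also have "\<dots> \<le> 1 / \<alpha>"
  proof (intro divide_right_mono)
    have "exp (- (\<alpha> * a)) \<le> 1" using assms by simp
    then show "exp (- (\<alpha> * a)) - exp (- (\<alpha> * c)) \<le> 1"
      using exp_gt_zero[of "- (\<alpha> * c)"] by linarith
  qed (use assms in simp)
  finally show ?thesis .
qed

lemma norm_integral_le_off_window:
  fixes f :: "real \<Rightarrow> 'a::banach"
  assumes "f integrable_on {0..R}" "0 \<le> R" "\<And>x. x \<in> {0..R} \<Longrightarrow> norm (f x) \<le> 1"
    and off_window: "\<And>u v. 0 \<le> u \<Longrightarrow> v \<le> u \<or> v \<le> m - 1 \<or> m + 1 \<le> u \<Longrightarrow>
      norm (integral {u..v} f) \<le> K"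
  shows "norm (integral {0..R} f) \<le> 2 * K + 2"
proof -
  define p where "p = min R (max 0 (m - 1))"
  define q where "q = min R (max 0 (m + 1))"
  have pq: "0 \<le> p" "p \<le> q" "q \<le> R" "q - p \<le> 2"
    using assms by (auto simp: p_def q_def)
  have int: "f integrable_on {u..v}" if "0 \<le> u" "v \<le> R" for u v
    using that by (intro integrable_on_subinterval[OF assms(1)]) auto
  have "integral {0..R} f = integral {0..p} f + (integral {p..q} f + integral {q..R} f)"
    using pq int Henstock_Kurzweil_Integration.integral_combine
    by (metis order.trans order_refl)
  moreover have "norm (integral {0..p} f) \<le> K" "norm (integral {q..R} f) \<le> K"
    using pq by (intro off_window; force simp: p_def q_def)+
  moreover have "norm (integral {p..q} f) \<le> 2"
  proof -
    have "norm (integral {p..q} f) \<le> integral {p..q} (\<lambda>_. 1::real)"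
      using pq assms by (intro integral_norm_bound_integral int) auto
    then show ?thesis using pq by simp
  qed
  ultimately show ?thesis
    by (smt (verit) norm_triangle_ineq)
qed

lemma one_minus_exp_neg_le_abs_one_minus_exp:
  fixes d t :: real
  assumes "0 < d" "d \<le> \<bar>t\<bar>"
  shows "1 - exp (- d) \<le> \<bar>1 - exp t\<bar>"
proof (cases "t \<ge> 0")
  case True
  have "2 \<le> exp d + exp (- d)"
    using exp_ge_add_one_self[of d] exp_ge_add_one_self[of "-d"] by linarith
  moreover have "exp d \<le> exp t" using True assms by simp
  moreover have "\<bar>1 - exp t\<bar> = exp t - 1" using True by simp
  ultimately show ?thesis by linarith
next
  case False
  then show ?thesis using assms by simp
qed

lemma exp_phase_deriv_lower_bound:
  fixes \<alpha> b s :: real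
  assumes "0 < \<alpha>" "\<alpha> \<noteq> 1" "\<bar>s\<bar> = 1"
  obtains m where "\<And>y. 1 \<le> \<bar>y - m\<bar> \<Longrightarrow>
    \<alpha> * (1 - exp (- \<bar>\<alpha> - 1\<bar>)) * exp (\<alpha> * y) \<le> \<bar>b * exp y + s * \<alpha> * exp (\<alpha> * y)\<bar>"
proof -
  define c where "c = \<alpha> * (1 - exp (- \<bar>\<alpha> - 1\<bar>))"
  have factor: "\<bar>b * exp y + s * \<alpha> * exp (\<alpha> * y)\<bar> = exp (\<alpha> * y) * \<bar>\<alpha> + s * b * exp ((1 - \<alpha>) * y)\<bar>"
    for y
  proof -
    have "b * exp y + s * \<alpha> * exp (\<alpha> * y) = s * exp (\<alpha> * y) * (\<alpha> + s * b * exp ((1 - \<alpha>) * y))"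
      using assms(3) by (simp add: algebra_simps abs_if flip: exp_add split: if_splits)
    then show ?thesis using assms(3) by (simp add: abs_mult)
  qed
  obtain m where m: "\<And>y. 1 \<le> \<bar>y - m\<bar> \<Longrightarrow> c \<le> \<bar>\<alpha> + s * b * exp ((1 - \<alpha>) * y)\<bar>"
  proof (cases "s * b < 0")
    case True
    \<comment> \<open>the zero of the derivative\<close>
    define m where "m = ln (\<alpha> / \<bar>s * b\<bar>) / (1 - \<alpha>)"
    have "\<alpha> + s * b * exp ((1 - \<alpha>) * y) = \<alpha> * (1 - exp ((1 - \<alpha>) * (y - m)))" for y
    proof -
      have "exp ((1 - \<alpha>) * m) = - \<alpha> / (s * b)"
        using assms True by (simp add: m_def divide_pos_neg)
      moreover have "exp ((1 - \<alpha>) * (y - m)) = exp ((1 - \<alpha>) * y) / exp ((1 - \<alpha>) * m)"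
        by (simp add: right_diff_distrib exp_diff)
      ultimately show ?thesis
        using True assms by (simp add: field_simps)
    qed
    moreover have "1 - exp (- \<bar>\<alpha> - 1\<bar>) \<le> \<bar>1 - exp ((1 - \<alpha>) * (y - m))\<bar>" if "1 \<le> \<bar>y - m\<bar>" for y
      using assms that
      by (intro one_minus_exp_neg_le_abs_one_minus_exp)
        (auto simp: abs_mult abs_minus_commute intro: mult_left_le[of 1, simplified])
    ultimately show ?thesis
      using assms by (intro that[of m]) (simp add: c_def abs_mult)
  next
    case False
    have "c \<le> \<alpha>" using assms by (simp add: c_def)
    moreover have "0 \<le> s * b * exp ((1 - \<alpha>) * y)" for y using False by simp
    ultimately have "c \<le> \<bar>\<alpha> + s * b * exp ((1 - \<alpha>) * y)\<bar>" for y
      by (smt (verit))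
    then show ?thesis using that by blast
  qed
  show thesis
  proof (rule that)
    fix y
    assume "1 \<le> \<bar>y - m\<bar>"
    then show "\<alpha> * (1 - exp (- \<bar>\<alpha> - 1\<bar>)) * exp (\<alpha> * y) \<le> \<bar>b * exp y + s * \<alpha> * exp (\<alpha> * y)\<bar>"
      unfolding factor using m by (simp add: c_def mult.commute)
  qed
qed

lemma norm_integral_cis_exp_phase_le:
  fixes \<alpha> b s c u v :: real
  assumes "0 < \<alpha>" "\<bar>s\<bar> = 1" "0 < c" "0 \<le> u" "u \<le> v"
    and low: "\<And>y. y \<in> {u..v} \<Longrightarrow> c * exp (\<alpha> * y) \<le> \<bar>b * exp y + s * \<alpha> * exp (\<alpha> * y)\<bar>"
  shows "norm (integral {u..v} (\<lambda>x. cis (b * exp x + s * exp (\<alpha> * x))))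
           \<le> 2 / c + (1 / c + \<alpha> * \<bar>\<alpha> - 1\<bar> / c\<^sup>2) / \<alpha>"
proof -
  define \<phi>' where "\<phi>' = (\<lambda>y. b * exp y + s * \<alpha> * exp (\<alpha> * y))"
  define \<phi>'' where "\<phi>'' = (\<lambda>y. b * exp y + s * \<alpha>\<^sup>2 * exp (\<alpha> * y))"
  define K where "K = 1 / c + \<alpha> * \<bar>\<alpha> - 1\<bar> / c\<^sup>2"
  have \<phi>'_ge: "c \<le> \<bar>\<phi>' y\<bar>" if "y \<in> {u..v}" for y
  proof -
    have "c \<le> c * exp (\<alpha> * y)" using that assms by simp
    then show ?thesis using low[OF that] by (simp add: \<phi>'_def)
  qed
  then have \<phi>'_nz: "\<phi>' y \<noteq> 0" if "y \<in> {u..v}" for y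
    using that \<open>0 < c\<close> by fastforce
  have \<phi>''_le: "\<bar>\<phi>'' y\<bar> / (\<phi>' y)\<^sup>2 \<le> K * exp (- (\<alpha> * y))" if "y \<in> {u..v}" for y
  proof -
    have "\<phi>'' y = \<phi>' y + s * (\<alpha> * (\<alpha> - 1)) * exp (\<alpha> * y)"
      by (simp add: \<phi>'_def \<phi>''_def algebra_simps power2_eq_square)
    then have "\<bar>\<phi>'' y\<bar> \<le> \<bar>\<phi>' y\<bar> + \<alpha> * \<bar>\<alpha> - 1\<bar> * exp (\<alpha> * y)"
      using assms by (simp add: abs_mult abs_triangle_ineq[THEN order_trans])
    then have "\<bar>\<phi>'' y\<bar> / \<bar>\<phi>' y\<bar>\<^sup>2 \<le> K / exp (\<alpha> * y)"
      unfolding K_def using assms low[OF that] by (intro abs_div_square_le) (auto simp: \<phi>'_def)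
    then show ?thesis by (simp add: exp_minus divide_inverse)
  qed
  have "norm (integral {u..v} (\<lambda>x. cis (b * exp x + s * exp (\<alpha> * x))))
      \<le> 1 / \<bar>\<phi>' u\<bar> + 1 / \<bar>\<phi>' v\<bar> + integral {u..v} (\<lambda>y. \<bar>\<phi>'' y\<bar> / (\<phi>' y)\<^sup>2)"
    using \<open>u \<le> v\<close> \<phi>'_nz unfolding \<phi>'_def \<phi>''_def
    by (intro norm_integral_cis_le)
      (auto intro!: derivative_eq_intros continuous_intros simp: field_simps power2_eq_square)
  also have "1 / \<bar>\<phi>' u\<bar> \<le> 1 / c"
    using \<phi>'_ge[of u] assms by (auto intro: frac_le)
  also have "1 / \<bar>\<phi>' v\<bar> \<le> 1 / c"
    using \<phi>'_ge[of v] assms by (auto intro: frac_le)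
  also have "integral {u..v} (\<lambda>y. \<bar>\<phi>'' y\<bar> / (\<phi>' y)\<^sup>2) \<le> integral {u..v} (\<lambda>y. K * exp (- (\<alpha> * y)))"
    using \<phi>'_nz \<phi>''_le unfolding \<phi>'_def \<phi>''_def
    by (intro integral_le integrable_continuous_interval) (auto intro!: continuous_intros)
  also have "\<dots> \<le> K / \<alpha>"
    using integral_exp_neg_le[OF \<open>0 < \<alpha>\<close> \<open>0 \<le> u\<close> \<open>u \<le> v\<close>] assms
    by (simp add: K_def mult_left_mono divide_inverse)
  finally show ?thesis by (simp add: K_def)
qed

lemma norm_integral_cis_exp_phase_le_off_window:
  fixes \<alpha> b s c m u v :: real
  assumes "0 < \<alpha>" "\<bar>s\<bar> = 1" "0 < c" "0 \<le> u"
    and "\<And>y. 1 \<le> \<bar>y - m\<bar> \<Longrightarrow> c * exp (\<alpha> * y) \<le> \<bar>b * exp y + s * \<alpha> * exp (\<alpha> * y)\<bar>"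
    and off: "v \<le> u \<or> v \<le> m - 1 \<or> m + 1 \<le> u"
  shows "norm (integral {u..v} (\<lambda>x. cis (b * exp x + s * exp (\<alpha> * x))))
           \<le> 2 / c + (1 / c + \<alpha> * \<bar>\<alpha> - 1\<bar> / c\<^sup>2) / \<alpha>"
proof (cases "v \<le> u")
  case True
  then have "integral {u..v} (\<lambda>x. cis (b * exp x + s * exp (\<alpha> * x))) = 0"
    by (metis box_real(2) content_real_eq_0 integral_null)
  then show ?thesis using assms by simp
next
  case False
  with off have "1 \<le> \<bar>y - m\<bar>" if "y \<in> {u..v}" for y
    using that by auto
  with False show ?thesis
    using assms by (intro norm_integral_cis_exp_phase_le) auto
qed

theorem lemma3:
  fixes \<alpha> :: real
  assumes "\<alpha> > 0" and "\<alpha> \<noteq> 1"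
  shows "\<exists>C. \<forall>R>0. \<forall>b::real. \<forall>s\<in>{-1, 1::real}.
           norm (integral {0..R}
             (\<lambda>x. cis (b * exp x + s * exp (\<alpha> * x)))) \<le> C"
proof -
  define c where "c = \<alpha> * (1 - exp (- \<bar>\<alpha> - 1\<bar>))"
  define K where "K = 2 / c + (1 / c + \<alpha> * \<bar>\<alpha> - 1\<bar> / c\<^sup>2) / \<alpha>"
  have "0 < c" using assms by (simp add: c_def)
  have "norm (integral {0..R} (\<lambda>x. cis (b * exp x + s * exp (\<alpha> * x)))) \<le> 2 * K + 2"
    if "0 < R" "s \<in> {-1, 1}" for R b s
  proof -
    have "\<bar>s\<bar> = 1" using that by auto
    obtain m where "\<And>y. 1 \<le> \<bar>y - m\<bar> \<Longrightarrow> c * exp (\<alpha> * y) \<le> \<bar>b * exp y + s * \<alpha> * exp (\<alpha> * y)\<bar>"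
      using exp_phase_deriv_lower_bound[OF assms \<open>\<bar>s\<bar> = 1\<close>, of b] unfolding c_def by blast
    then show ?thesis
      unfolding K_def using assms \<open>0 < c\<close> \<open>\<bar>s\<bar> = 1\<close> \<open>0 < R\<close>
      by (intro norm_integral_le_off_window[where m = m] norm_integral_cis_exp_phase_le_off_window
          integrable_continuous_interval) (auto intro!: continuous_intros)
  qed
  then show ?thesis by blast
qed

end
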